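(* Let $q\in\mathbb{C}[x_0,\dots,x_3]_2$ be a quadratic form of rank four, let $[l_1],[l_2]\in\mathbb{P}(S_1)$ and assume that $q_{l_1}(l_2^2)=0$ (equivalently $q_{l_2}(l_1^2)=0$). Then $p_{l_2}(l_1)=p_{l_1}(l_2)=0$ if and only if $[l_1]\in Q^{-1}$ or $[l_2]\in Q^{-1}$.
   Context: $S=\mathbb{C}[x_0,\dots,x_3]$, $T=\mathbb{C}[y_0,\dots,y_3]$; $T$ acts on $S$ and $S$ acts on $T$ by differentiation. For $l\in S_1$, $q_l\in T_2$ is the unique form with $q_l(q^2)=l^2$. $q^{-1}\in T_2$ is the inverse quadric (the quadric with $S_1\to T_1$, $l\mapsto l(q^{-1})$, inverse to $T_1\to S_1$, $g\mapsto g(q)$), $Q^{-1}=\{q^{-1}=0\}$, and $p_l=l(q^{-1})\in T_1$ (so $p_{l_2}(l_1)\in\mathbb{C}$ is $p_{l_2}$ applied to $l_1$). *)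

theory Defs
  imports "HOL-Library.Poly_Mapping" "HOL-Analysis.Analysis"
begin

text \<open>Polynomials in variables with indices 0..3 over the complex numbers, represented as
finitely supported coefficient functions on monomials (exponent vectors). The same type is
used for S = C[x_0..x_3] and for T = C[y_0..y_3].\<close>

type_synonym mono = "nat \<Rightarrow>\<^sub>0 nat"
type_synonym cpoly = "mono \<Rightarrow>\<^sub>0 complex"

definition mdeg :: "mono \<Rightarrow> nat" where
  "mdeg m = (\<Sum>i\<in>Poly_Mapping.keys m. Poly_Mapping.lookup m i)"

definition Var :: "nat \<Rightarrow> cpoly" where
  "Var i = Poly_Mapping.single (Poly_Mapping.single i 1) 1"

definition Forms :: "nat \<Rightarrow> cpoly set" where
  "Forms d = {f. \<forall>m\<in>Poly_Mapping.keys f. Poly_Mapping.keys m \<subseteq> {0..<4} \<and> mdeg m = d}"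

text \<open>Apolarity action: g(f), the variable y_i acting as the partial derivative d/dx_i.\<close>
definition mdvd :: "mono \<Rightarrow> mono \<Rightarrow> bool" where
  "mdvd b a \<longleftrightarrow> (\<forall>i. Poly_Mapping.lookup b i \<le> Poly_Mapping.lookup a i)"

definition dcoef :: "mono \<Rightarrow> mono \<Rightarrow> complex" where
  "dcoef a b = (\<Prod>i\<in>Poly_Mapping.keys a. of_nat (fact (Poly_Mapping.lookup a i)) / of_nat (fact (Poly_Mapping.lookup a i - Poly_Mapping.lookup b i)))"

definition act :: "cpoly \<Rightarrow> cpoly \<Rightarrow> cpoly" where
  "act g f = (\<Sum>b\<in>Poly_Mapping.keys g. \<Sum>a\<in>{a\<in>Poly_Mapping.keys f. mdvd b a}.
      Poly_Mapping.single (a - b) (Poly_Mapping.lookup g b * Poly_Mapping.lookup f a * dcoef a b))"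

definition const :: "cpoly \<Rightarrow> complex" where
  "const f = Poly_Mapping.lookup f 0"

definition peval :: "cpoly \<Rightarrow> (nat \<Rightarrow> complex) \<Rightarrow> complex" where
  "peval f c = (\<Sum>m\<in>Poly_Mapping.keys f. Poly_Mapping.lookup f m * (\<Prod>i\<in>Poly_Mapping.keys m. c i ^ Poly_Mapping.lookup m i))"

definition lcoords :: "cpoly \<Rightarrow> nat \<Rightarrow> complex" where
  "lcoords l i = Poly_Mapping.lookup l (Poly_Mapping.single i 1)"

text \<open>Rank of a quadratic form: rank of its (Hessian) symmetric 4x4 matrix.\<close>
definition idx4 :: "4 \<Rightarrow> nat" where
  "idx4 i = nat (Rep_bit0 i)"

definition qmatrix :: "cpoly \<Rightarrow> complex^4^4" where
  "qmatrix q = (\<chi> i j. const (act (Var (idx4 i) * Var (idx4 j)) q))"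

definition qrank :: "cpoly \<Rightarrow> nat" where
  "qrank q = rank (qmatrix q)"

definition qsub :: "cpoly \<Rightarrow> cpoly \<Rightarrow> cpoly" where
  "qsub q l = (THE g. g \<in> Forms 2 \<and> act g (q * q) = l * l)"

definition qinv :: "cpoly \<Rightarrow> cpoly" where
  "qinv q = (THE h. h \<in> Forms 2 \<and> (\<forall>l\<in>Forms 1. act (act l h) q = l)
                   \<and> (\<forall>g\<in>Forms 1. act (act g q) h = g))"

definition pl :: "cpoly \<Rightarrow> cpoly \<Rightarrow> cpoly" where
  "pl q l = act l (qinv q)"

end

theory Submission
  imports Defs
begin

text \<open>Let \<open>A\<close> be the Hessian matrix of \<open>q\<close>, \<open>B = A\<^sup>-\<^sup>1\<close>, and write linear forms as
\<open>l\<^sub>c = \<Sum> c\<^sub>i x\<^sub>i\<close>. Then \<open>q\<^sup>-\<^sup>1 = y\<^sup>T B y / 2\<close>, so \<open>q\<^sup>-\<^sup>1(c) = c\<^sup>T B c / 2\<close>, and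
\<open>p\<^sub>l\<^sub>c = \<Sum> (B c)\<^sub>i y\<^sub>i\<close>, so \<open>p\<^sub>l\<^sub>d(l\<^sub>c) = p\<^sub>l\<^sub>c(l\<^sub>d) = c\<^sup>T B d\<close>.
Applying the candidate \<open>p\<^sub>l\<^sub>c\<^sup>2/2 - (c\<^sup>T B c / 6) q\<^sup>-\<^sup>1\<close> to \<open>q\<^sup>2\<close> gives \<open>l\<^sub>c\<^sup>2\<close>, and an apolar
quadric killing \<open>q\<^sup>2\<close> vanishes, so this candidate is \<open>q\<^sub>l\<^sub>c\<close>. Hence
\<open>q\<^sub>l\<^sub>c(l\<^sub>d\<^sup>2) = (c\<^sup>T B d)\<^sup>2 - (c\<^sup>T B c)(d\<^sup>T B d)/6\<close>, and when this vanishes,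
\<open>c\<^sup>T B d = 0\<close> iff \<open>c\<^sup>T B c = 0\<close> or \<open>d\<^sup>T B d = 0\<close>.\<close>

section \<open>Constants and the apolarity action\<close>

definition Const :: "complex \<Rightarrow> cpoly" where
  "Const c = Poly_Mapping.single 0 c"

lemma lookup_Const_mult: "Poly_Mapping.lookup (Const c * p) m = c * Poly_Mapping.lookup p m"
proof -
  have "Const c * p = Poly_Mapping.map ((*) c) p"
    by (simp add: Const_def mult_map_scale_conv_mult)
  then show ?thesis by (simp add: map.rep_eq when_def)
qed

lemma keys_Const_mult: "Poly_Mapping.keys (Const c * p) \<subseteq> Poly_Mapping.keys p"
  by (auto simp: in_keys_iff lookup_Const_mult)

lemma Const_mult_single: "Const c * Poly_Mapping.single m v = Poly_Mapping.single m (c * v)"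
  by (simp add: Const_def mult_single)

lemma Const_0 [simp]: "Const 0 = 0" by (simp add: Const_def)
lemma Const_1 [simp]: "Const 1 = 1" by (simp add: Const_def)
lemma Const_numeral: "Const (numeral n) = numeral n" by (simp add: Const_def)
lemma Const_add: "Const (a + b) = Const a + Const b" by (simp add: Const_def single_add)
lemma Const_diff: "Const (a - b) = Const a - Const b" by (simp add: Const_def single_diff)
lemma Const_mult: "Const (a * b) = Const a * Const b" by (simp add: Const_def mult_single)

lemma Const_sum: "Const (sum f A) = (\<Sum>x\<in>A. Const (f x))"
  by (induction A rule: infinite_finite_induct) (auto simp: Const_add)

lemma const_Const [simp]: "const (Const c) = c" by (simp add: const_def Const_def)

lemma Const_inject: "Const a = Const b \<longleftrightarrow> a = b" by (metis const_Const)

lemma Const_eq_0_iff [simp]: "Const a = 0 \<longleftrightarrow> a = 0" by (metis Const_0 Const_inject)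

lemma Const_half_double: "Const (1/2) * (2 * f) = f"
  by (simp add: mult.assoc[symmetric] Const_numeral[symmetric] Const_mult[symmetric])

lemma double_eq_0_iff: "2 * (f :: cpoly) = 0 \<longleftrightarrow> f = 0"
  by (metis Const_half_double mult_zero_right)

definition mono_act :: "mono \<Rightarrow> mono \<Rightarrow> cpoly" where
  "mono_act b a = (if mdvd b a then Poly_Mapping.single (a - b) (dcoef a b) else 0)"

lemma Const_mult_mono_act:
  "Const v * mono_act b a = (if mdvd b a then Poly_Mapping.single (a - b) (v * dcoef a b) else 0)"
  by (simp add: mono_act_def Const_mult_single)

lemma act_expand:
  assumes "finite B" "Poly_Mapping.keys g \<subseteq> B" "finite A" "Poly_Mapping.keys f \<subseteq> A"
  shows "act g f = (\<Sum>b\<in>B. \<Sum>a\<in>A.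
           Const (Poly_Mapping.lookup g b * Poly_Mapping.lookup f a) * mono_act b a)"
proof -
  let ?t = "\<lambda>b a. Const (Poly_Mapping.lookup g b * Poly_Mapping.lookup f a) * mono_act b a"
  have "act g f = (\<Sum>b\<in>Poly_Mapping.keys g. \<Sum>a\<in>Poly_Mapping.keys f. ?t b a)"
    unfolding act_def Const_mult_mono_act
    by (rule sum.cong[OF refl], subst sum.inter_filter[symmetric]) (auto intro!: sum.cong)
  also have "\<dots> = (\<Sum>b\<in>B. \<Sum>a\<in>Poly_Mapping.keys f. ?t b a)"
    by (rule sum.mono_neutral_left) (use assms in \<open>auto simp: in_keys_iff\<close>)
  also have "\<dots> = (\<Sum>b\<in>B. \<Sum>a\<in>A. ?t b a)"
    by (rule sum.cong[OF refl], rule sum.mono_neutral_left)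
       (use assms in \<open>auto simp: in_keys_iff\<close>)
  finally show ?thesis .
qed

lemma act_add_left: "act (g1 + g2) f = act g1 f + act g2 f"
proof -
  let ?B = "Poly_Mapping.keys g1 \<union> Poly_Mapping.keys g2"
  have "Poly_Mapping.keys (g1 + g2) \<subseteq> ?B" by (rule keys_add)
  then show ?thesis
    by (subst (1 2 3) act_expand[where B="?B" and A="Poly_Mapping.keys f"])
       (auto simp: lookup_add distrib_right Const_add sum.distrib)
qed

lemma act_add_right: "act g (f1 + f2) = act g f1 + act g f2"
proof -
  let ?A = "Poly_Mapping.keys f1 \<union> Poly_Mapping.keys f2"
  have "Poly_Mapping.keys (f1 + f2) \<subseteq> ?A" by (rule keys_add)
  then show ?thesis
    by (subst (1 2 3) act_expand[where A="?A" and B="Poly_Mapping.keys g"])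
       (auto simp: lookup_add distrib_left Const_add distrib_right sum.distrib)
qed

lemma act_Const_left: "act (Const c * g) f = Const c * act g f"
  by (subst (1 2) act_expand[where B="Poly_Mapping.keys g" and A="Poly_Mapping.keys f"])
     (auto simp: keys_Const_mult lookup_Const_mult sum_distrib_left mult.assoc[symmetric]
                 Const_mult[symmetric])

lemma act_Const_right: "act g (Const c * f) = Const c * act g f"
  by (subst (1 2) act_expand[where B="Poly_Mapping.keys g" and A="Poly_Mapping.keys f"])
     (auto simp: keys_Const_mult lookup_Const_mult sum_distrib_left mult.assoc Const_mult
                 mult.left_commute)

lemma act_0_left [simp]: "act 0 f = 0" by (simp add: act_def)
lemma act_0_right [simp]: "act g 0 = 0" by (simp add: act_def)

lemma act_sum_left: "act (\<Sum>x\<in>X. G x) f = (\<Sum>x\<in>X. act (G x) f)"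
  by (induction X rule: infinite_finite_induct) (auto simp: act_add_left)

lemma act_sum_right: "act g (\<Sum>x\<in>X. F x) = (\<Sum>x\<in>X. act g (F x))"
  by (induction X rule: infinite_finite_induct) (auto simp: act_add_right)

lemma act_diff_left: "act (g1 - g2) f = act g1 f - act g2 f"
  by (metis act_add_left add_diff_cancel_right' diff_add_cancel)

lemma act_single_single: "act (Poly_Mapping.single b 1) (Poly_Mapping.single a 1) = mono_act b a"
  by (subst act_expand[where B="{b}" and A="{a}"]) auto

lemma cpoly_monomial_expansion:
  "f = (\<Sum>a\<in>Poly_Mapping.keys f. Const (Poly_Mapping.lookup f a) * Poly_Mapping.single a 1)"
  by (rule poly_mapping_eqI)
     (auto simp: lookup_sum Const_mult_single lookup_single when_def in_keys_iff)

definition cpoly_linear :: "(cpoly \<Rightarrow> cpoly) \<Rightarrow> bool" where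
  "cpoly_linear F \<longleftrightarrow> (\<forall>f g. F (f + g) = F f + F g) \<and> (\<forall>c f. F (Const c * f) = Const c * F f)"

lemma cpoly_linear_sum:
  assumes "cpoly_linear F"
  shows "F (\<Sum>x\<in>X. G x) = (\<Sum>x\<in>X. F (G x))"
proof -
  have "F 0 = 0" using assms unfolding cpoly_linear_def by (metis Const_0 mult_zero_left)
  then show ?thesis
    by (induction X rule: infinite_finite_induct) (use assms in \<open>auto simp: cpoly_linear_def\<close>)
qed

lemma cpoly_linear_eqI:
  assumes "cpoly_linear F" "cpoly_linear G"
    and "\<And>a. F (Poly_Mapping.single a 1) = G (Poly_Mapping.single a 1)"
  shows "F f = G f"
proof -
  let ?e = "\<lambda>H. \<Sum>a\<in>Poly_Mapping.keys f.
              Const (Poly_Mapping.lookup f a) * H (Poly_Mapping.single a 1)"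
  have "F f = ?e F"
    by (subst cpoly_monomial_expansion)
       (use assms(1) in \<open>simp add: cpoly_linear_sum cpoly_linear_def\<close>)
  moreover have "G f = ?e G"
    by (subst cpoly_monomial_expansion)
       (use assms(2) in \<open>simp add: cpoly_linear_sum cpoly_linear_def\<close>)
  ultimately show ?thesis using assms(3) by simp
qed

lemma dcoef_superset:
  assumes "finite S" "Poly_Mapping.keys a \<subseteq> S"
  shows "dcoef a b = (\<Prod>i\<in>S. of_nat (fact (Poly_Mapping.lookup a i))
                        / of_nat (fact (Poly_Mapping.lookup a i - Poly_Mapping.lookup b i)))"
  unfolding dcoef_def
  by (rule prod.mono_neutral_left) (use assms in \<open>auto simp: in_keys_iff\<close>)

lemma lookup_minus_mono:
  "Poly_Mapping.lookup (a - b) i = Poly_Mapping.lookup a i - Poly_Mapping.lookup (b :: mono) i"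
  by (simp add: minus_poly_mapping.rep_eq)

lemma keys_minus_mono: "Poly_Mapping.keys (a - b) \<subseteq> Poly_Mapping.keys (a :: mono)"
  by (auto simp: in_keys_iff lookup_minus_mono)

lemma mono_act_add:
  "mono_act (b1 + b2) a = (if mdvd b2 a then Const (dcoef a b2) * mono_act b1 (a - b2) else 0)"
proof -
  have dvd: "mdvd (b1 + b2) a \<longleftrightarrow> mdvd b2 a \<and> mdvd b1 (a - b2)"
    unfolding mdvd_def
    by (auto simp: lookup_add lookup_minus_mono)
       (metis le_diff_conv2 add.commute le_add2 order_trans le_diff_conv)+
  have diff: "a - (b1 + b2) = a - b2 - b1"
    by (rule poly_mapping_eqI) (simp add: lookup_minus_mono lookup_add)
  have coef: "dcoef a (b1 + b2) = dcoef a b2 * dcoef (a - b2) b1" if "mdvd (b1 + b2) a"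
  proof -
    let ?S = "Poly_Mapping.keys a" and ?l = "Poly_Mapping.lookup"
    have "dcoef a (b1 + b2) =
        (\<Prod>i\<in>?S. of_nat (fact (?l a i)) / of_nat (fact (?l a i - ?l (b1 + b2) i)))"
      by (rule dcoef_superset) auto
    also have "\<dots> = (\<Prod>i\<in>?S. (of_nat (fact (?l a i)) / of_nat (fact (?l a i - ?l b2 i))) *
        (of_nat (fact (?l (a - b2) i)) / of_nat (fact (?l (a - b2) i - ?l b1 i))))"
      by (rule prod.cong) (auto simp: lookup_add lookup_minus_mono diff_diff_add add.commute)
    also have "\<dots> = dcoef a b2 * dcoef (a - b2) b1"
      by (subst prod.distrib) (simp add: dcoef_superset[of ?S] keys_minus_mono)
    finally show ?thesis .
  qed
  show ?thesis
    by (auto simp: mono_act_def dvd diff coef Const_mult_single mult.commute)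
qed

text \<open>Both sides are linear in \<open>g1\<close>, \<open>g2\<close> and \<open>f\<close>, so it suffices to check monomials,
  where this is \<open>mono_act_add\<close>.\<close>
lemma act_mult: "act (g1 * g2) f = act g1 (act g2 f)"
proof -
  let ?s = "\<lambda>a. Poly_Mapping.single a (1 :: complex)"
  have mono: "act (?s b1 * ?s b2) (?s a) = act (?s b1) (act (?s b2) (?s a))" for b1 b2 a
  proof -
    have "mono_act b2 a = (if mdvd b2 a then Const (dcoef a b2) * ?s (a - b2) else 0)"
      by (simp add: mono_act_def Const_mult_single)
    then show ?thesis
      by (simp add: mult_single act_single_single mono_act_add act_Const_right)
  qed
  have left_mono: "act (?s b1 * g2) (?s a) = act (?s b1) (act g2 (?s a))" for b1 a
    by (rule cpoly_linear_eqI[where F="\<lambda>g2. act (?s b1 * g2) (?s a)"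
          and G="\<lambda>g2. act (?s b1) (act g2 (?s a))"])
       (auto simp: cpoly_linear_def mono distrib_left act_add_left act_add_right act_Const_left
                   act_Const_right mult.left_commute)
  have right_mono: "act (g1 * g2) (?s a) = act g1 (act g2 (?s a))" for a
    by (rule cpoly_linear_eqI[where F="\<lambda>g1. act (g1 * g2) (?s a)"
          and G="\<lambda>g1. act g1 (act g2 (?s a))"])
       (auto simp: cpoly_linear_def left_mono distrib_right act_add_left act_Const_left mult.assoc)
  show ?thesis
    by (rule cpoly_linear_eqI[where F="\<lambda>f. act (g1 * g2) f" and G="\<lambda>f. act g1 (act g2 f)"])
       (auto simp: cpoly_linear_def right_mono act_add_right act_Const_right)
qed

lemma act_commute: "act g1 (act g2 f) = act g2 (act g1 f)"
  by (metis act_mult mult.commute)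

section \<open>Partial derivatives and homogeneous forms\<close>

abbreviation partial :: "nat \<Rightarrow> cpoly \<Rightarrow> cpoly" where
  "partial i f \<equiv> act (Var i) f"

definition unit_mono :: "nat \<Rightarrow> mono" where
  "unit_mono i = Poly_Mapping.single i 1"

lemma lookup_unit_mono: "Poly_Mapping.lookup (unit_mono i) k = (if k = i then 1 else 0)"
  by (simp add: unit_mono_def lookup_single when_def)

lemma Var_unit_mono: "Var i = Poly_Mapping.single (unit_mono i) 1"
  by (simp add: Var_def unit_mono_def)

lemma unit_mono_add_diff:
  "Poly_Mapping.lookup a i \<noteq> 0 \<Longrightarrow> unit_mono i + (a - unit_mono i) = a"
  by (rule poly_mapping_eqI) (auto simp: lookup_minus_mono lookup_add lookup_unit_mono)

lemma partial_single:
  "partial i (Poly_Mapping.single a 1) =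
     Poly_Mapping.single (a - unit_mono i) (of_nat (Poly_Mapping.lookup a i))"
proof (cases "Poly_Mapping.lookup a i = 0")
  case True
  then have "\<not> mdvd (unit_mono i) a" by (auto simp: mdvd_def lookup_unit_mono split: if_splits)
  then show ?thesis using True by (simp add: Var_unit_mono act_single_single mono_act_def)
next
  case False
  then have dvd: "mdvd (unit_mono i) a" by (auto simp: mdvd_def lookup_unit_mono)
  have "i \<in> Poly_Mapping.keys a" using False by (simp add: in_keys_iff)
  moreover have "dcoef a (unit_mono i) =
      (\<Prod>k\<in>Poly_Mapping.keys a. if k = i then of_nat (Poly_Mapping.lookup a i) else 1)"
    unfolding dcoef_def
    by (rule prod.cong[OF refl])
       (use False in \<open>auto simp: lookup_unit_mono fact_reduce[of "Poly_Mapping.lookup a i"]\<close>)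
  ultimately have "dcoef a (unit_mono i) = of_nat (Poly_Mapping.lookup a i)" by simp
  then show ?thesis using dvd by (simp add: Var_unit_mono act_single_single mono_act_def)
qed

lemma partial_mult_single:
  "partial i (Poly_Mapping.single a 1 * Poly_Mapping.single c 1) =
     partial i (Poly_Mapping.single a 1) * Poly_Mapping.single c 1
     + Poly_Mapping.single a 1 * partial i (Poly_Mapping.single c 1)"
proof -
  have shift: "Poly_Mapping.single (x - unit_mono i + y) (of_nat (Poly_Mapping.lookup x i)) =
      Poly_Mapping.single (x + y - unit_mono i) (of_nat (Poly_Mapping.lookup x i) :: complex)"
    for x y :: mono
  proof (cases "Poly_Mapping.lookup x i = 0")
    case False
    have "x - unit_mono i + y = x + y - unit_mono i"
      by (rule poly_mapping_eqI)
         (use False in \<open>auto simp: lookup_minus_mono lookup_add lookup_unit_mono\<close>)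
    then show ?thesis by simp
  qed simp
  have "partial i (Poly_Mapping.single a 1 * Poly_Mapping.single c 1) =
      Poly_Mapping.single (a + c - unit_mono i)
        (of_nat (Poly_Mapping.lookup a i) + of_nat (Poly_Mapping.lookup c i))"
    by (simp add: mult_single partial_single lookup_add)
  also have "\<dots> = Poly_Mapping.single (a - unit_mono i + c) (of_nat (Poly_Mapping.lookup a i))
      + Poly_Mapping.single (c - unit_mono i + a) (of_nat (Poly_Mapping.lookup c i))"
    by (simp only: shift[of a c] shift[of c a] single_add add.commute[of c a])
  also have "\<dots> = partial i (Poly_Mapping.single a 1) * Poly_Mapping.single c 1
      + Poly_Mapping.single a 1 * partial i (Poly_Mapping.single c 1)"
    by (simp add: mult_single partial_single add.commute)
  finally show ?thesis .
qed

lemma partial_mult: "partial i (f * g) = partial i f * g + f * partial i g"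
proof -
  let ?s = "\<lambda>a. Poly_Mapping.single a (1 :: complex)"
  have mono: "partial i (?s a * g) = partial i (?s a) * g + ?s a * partial i g" for a
    by (rule cpoly_linear_eqI[where F="\<lambda>g. partial i (?s a * g)"
          and G="\<lambda>g. partial i (?s a) * g + ?s a * partial i g"])
       (auto simp: cpoly_linear_def partial_mult_single distrib_left act_add_right act_Const_right
                   mult.left_commute)
  show ?thesis
    by (rule cpoly_linear_eqI[where F="\<lambda>f. partial i (f * g)"
          and G="\<lambda>f. partial i f * g + f * partial i g"])
       (simp_all add: cpoly_linear_def mono distrib_right distrib_left act_add_right act_Const_right
                      mult.assoc)
qed

lemma partial_Var: "partial i (Var j) = of_bool (i = j)"
proof -
  have "Var j = Poly_Mapping.single (unit_mono j) 1" by (rule Var_unit_mono)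
  then show ?thesis by (simp add: partial_single lookup_unit_mono)
qed

lemma partial_Const: "partial i (Const c) = 0"
proof -
  have "partial i (Poly_Mapping.single 0 1) = 0"
    by (simp only: partial_single) simp
  moreover have "Const c = Const c * Poly_Mapping.single 0 1"
    by (simp add: Const_mult_single Const_def)
  ultimately show ?thesis by (metis act_Const_right mult_zero_right)
qed

lemma partial_numeral [simp]: "partial i (numeral n) = 0"
  using partial_Const[of i "numeral n"] by (simp add: Const_numeral)

lemma mdeg_superset:
  "finite S \<Longrightarrow> Poly_Mapping.keys m \<subseteq> S \<Longrightarrow> mdeg m = (\<Sum>k\<in>S. Poly_Mapping.lookup m k)"
  unfolding mdeg_def by (rule sum.mono_neutral_left) (auto simp: in_keys_iff)

lemma mdeg_add: "mdeg (x + y) = mdeg x + mdeg y"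
proof -
  let ?S = "Poly_Mapping.keys x \<union> Poly_Mapping.keys y"
  have "Poly_Mapping.keys (x + y) \<subseteq> ?S" by (rule keys_add)
  then show ?thesis by (simp add: mdeg_superset[of ?S] lookup_add sum.distrib)
qed

lemma mdeg_unit_mono: "mdeg (unit_mono i) = 1" by (simp add: mdeg_def unit_mono_def)

lemma mdeg_eq_0_iff: "mdeg m = 0 \<longleftrightarrow> m = 0"
proof
  assume "mdeg m = 0"
  then have "\<forall>k\<in>Poly_Mapping.keys m. Poly_Mapping.lookup m k = 0" unfolding mdeg_def by simp
  then show "m = 0" by (metis in_keys_iff lookup_zero poly_mapping_eqI)
qed (simp add: mdeg_def)

lemma Forms_iff:
  "f \<in> Forms d \<longleftrightarrow>
     (\<forall>m. Poly_Mapping.lookup f m \<noteq> 0 \<longrightarrow> Poly_Mapping.keys m \<subseteq> {0..<4} \<and> mdeg m = d)"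
  by (auto simp: Forms_def in_keys_iff)

lemma Forms_0 [simp]: "0 \<in> Forms d" by (simp add: Forms_def)

lemma Forms_add: "f \<in> Forms d \<Longrightarrow> g \<in> Forms d \<Longrightarrow> f + g \<in> Forms d"
  using keys_add[of f g] by (auto simp: Forms_def)

lemma Forms_Const_mult: "f \<in> Forms d \<Longrightarrow> Const c * f \<in> Forms d"
  by (auto simp: Forms_iff lookup_Const_mult)

lemma Forms_uminus: "f \<in> Forms d \<Longrightarrow> - f \<in> Forms d"
  by (auto simp: Forms_iff)

lemma Forms_diff: "f \<in> Forms d \<Longrightarrow> g \<in> Forms d \<Longrightarrow> f - g \<in> Forms d"
  by (metis Forms_add Forms_uminus diff_conv_add_uminus)

lemma Forms_sum: "(\<And>x. x \<in> X \<Longrightarrow> F x \<in> Forms d) \<Longrightarrow> (\<Sum>x\<in>X. F x) \<in> Forms d"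
  by (induction X rule: infinite_finite_induct) (auto simp: Forms_add)

lemma Forms_single:
  "Poly_Mapping.keys m \<subseteq> {0..<4} \<Longrightarrow> mdeg m = d \<Longrightarrow> Poly_Mapping.single m c \<in> Forms d"
  by (auto simp: Forms_iff lookup_single when_def)

lemma Forms_Var: "i < 4 \<Longrightarrow> Var i \<in> Forms 1"
  unfolding Var_def by (rule Forms_single) (auto simp: mdeg_def)

lemma Forms_mult:
  assumes "f \<in> Forms d" "g \<in> Forms e"
  shows "f * g \<in> Forms (d + e)"
  unfolding Forms_def mem_Collect_eq
proof
  fix m assume "m \<in> Poly_Mapping.keys (f * g)"
  then obtain a b where ab: "m = a + b" "a \<in> Poly_Mapping.keys f" "b \<in> Poly_Mapping.keys g"
    using keys_mult by blast
  then have "Poly_Mapping.keys a \<subseteq> {0..<4}" "mdeg a = d" "Poly_Mapping.keys b \<subseteq> {0..<4}" "mdeg b = e"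
    using assms by (auto simp: Forms_def)
  then show "Poly_Mapping.keys m \<subseteq> {0..<4} \<and> mdeg m = d + e"
    using ab(1) keys_add[of a b] by (auto simp: mdeg_add)
qed

lemma Forms_partial: "f \<in> Forms (Suc d) \<Longrightarrow> partial i f \<in> Forms d"
proof -
  assume f: "f \<in> Forms (Suc d)"
  have mono: "partial i (Poly_Mapping.single a 1) \<in> Forms d" if a: "a \<in> Poly_Mapping.keys f" for a
  proof (cases "Poly_Mapping.lookup a i = 0")
    case False
    have "Poly_Mapping.keys a \<subseteq> {0..<4}" "mdeg a = Suc d" using f a by (auto simp: Forms_def)
    moreover have "mdeg (a - unit_mono i) = mdeg a - 1"
      using mdeg_add[of "unit_mono i" "a - unit_mono i"] unit_mono_add_diff[OF False]
      by (simp add: mdeg_unit_mono)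
    ultimately show ?thesis unfolding partial_single
      by (intro Forms_single) (use keys_minus_mono[of a "unit_mono i"] in auto)
  qed (simp add: partial_single)
  have "partial i f = (\<Sum>a\<in>Poly_Mapping.keys f.
      Const (Poly_Mapping.lookup f a) * partial i (Poly_Mapping.single a 1))"
    by (subst cpoly_monomial_expansion) (simp add: act_sum_right act_Const_right)
  also have "\<dots> \<in> Forms d" by (intro Forms_sum Forms_Const_mult mono)
  finally show ?thesis .
qed

lemma Forms_0_eq_Const: "f \<in> Forms 0 \<Longrightarrow> f = Const (const f)"
  by (rule poly_mapping_eqI)
     (auto simp: Forms_iff Const_def const_def lookup_single when_def mdeg_eq_0_iff)

lemma Var_mult_partial_single:
  "Var i * partial i (Poly_Mapping.single a 1) =
     Const (of_nat (Poly_Mapping.lookup a i)) * Poly_Mapping.single a 1"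
proof (cases "Poly_Mapping.lookup a i = 0")
  case False
  have "Var i * partial i (Poly_Mapping.single a 1) =
      Poly_Mapping.single a (1 * of_nat (Poly_Mapping.lookup a i))"
    by (simp only: partial_single) (simp only: Var_unit_mono mult_single unit_mono_add_diff[OF False])
  then show ?thesis by (simp add: Const_mult_single)
qed (simp add: partial_single)

lemma euler_homogeneous:
  assumes "f \<in> Forms d"
  shows "(\<Sum>i<4. Var i * partial i f) = Const (of_nat d) * f"
proof -
  let ?l = "Poly_Mapping.lookup" and ?s = "\<lambda>a. Poly_Mapping.single a (1 :: complex)"
  have deg: "(\<Sum>i<4. of_nat (?l a i)) = (of_nat d :: complex)" if "a \<in> Poly_Mapping.keys f" for a
  proof -
    have "Poly_Mapping.keys a \<subseteq> {0..<4}" "mdeg a = d" using that assms by (auto simp: Forms_def)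
    then have "(\<Sum>i<4. ?l a i) = d" by (simp add: mdeg_superset[of "{0..<4}"] lessThan_atLeast0)
    then show ?thesis by (metis of_nat_sum)
  qed
  have "(\<Sum>i<4. Var i * partial i f) =
      (\<Sum>i<4. \<Sum>a\<in>Poly_Mapping.keys f. Const (?l f a) * (Var i * partial i (?s a)))"
    by (subst (1) cpoly_monomial_expansion)
       (simp add: act_sum_right act_Const_right sum_distrib_left mult.left_commute)
  also have "\<dots> = (\<Sum>a\<in>Poly_Mapping.keys f.
      Const (?l f a) * (Const (\<Sum>i<4. of_nat (?l a i)) * ?s a))"
    by (subst sum.swap) (simp add: Var_mult_partial_single Const_sum sum_distrib_left sum_distrib_right)
  also have "\<dots> = (\<Sum>a\<in>Poly_Mapping.keys f. Const (of_nat d) * (Const (?l f a) * ?s a))"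
    by (rule sum.cong[OF refl]) (simp add: deg mult.left_commute)
  also have "\<dots> = Const (of_nat d) * f"
    by (subst (2) cpoly_monomial_expansion) (simp add: sum_distrib_left)
  finally show ?thesis .
qed

lemma Forms_eq_if_partial_eq:
  assumes "f \<in> Forms (Suc d)" "g \<in> Forms (Suc d)" "\<And>i. i < 4 \<Longrightarrow> partial i f = partial i g"
  shows "f = g"
proof (rule poly_mapping_eqI)
  fix m
  have "Const (of_nat (Suc d)) * f = (\<Sum>i<4. Var i * partial i f)"
    by (rule euler_homogeneous[OF assms(1), symmetric])
  also have "\<dots> = (\<Sum>i<4. Var i * partial i g)" using assms(3) by simp
  also have "\<dots> = Const (of_nat (Suc d)) * g" by (rule euler_homogeneous[OF assms(2)])
  finally have "of_nat (Suc d) * Poly_Mapping.lookup f m = of_nat (Suc d) * Poly_Mapping.lookup g m"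
    by (metis lookup_Const_mult)
  then show "Poly_Mapping.lookup f m = Poly_Mapping.lookup g m"
    by (simp del: of_nat_Suc)
qed

section \<open>Linear forms and Hessians\<close>

lemma sum_lessThan_delta:
  fixes f :: "nat \<Rightarrow> 'a::semiring_1"
  assumes "j < n"
  shows "(\<Sum>i<n. f i * of_bool (i = j)) = f j" "(\<Sum>i<n. f i * of_bool (j = i)) = f j"
    and "(\<Sum>i<n. of_bool (i = j) * f i) = f j" "(\<Sum>i<n. of_bool (j = i) * f i) = f j"
proof -
  have "{..<n} \<inter> {i. i = j} = {j}" "{..<n} \<inter> {i. j = i} = {j}" using assms by auto
  then show "(\<Sum>i<n. f i * of_bool (i = j)) = f j" "(\<Sum>i<n. f i * of_bool (j = i)) = f j"
    and "(\<Sum>i<n. of_bool (i = j) * f i) = f j" "(\<Sum>i<n. of_bool (j = i) * f i) = f j"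
    by simp_all
qed

lemma Const_of_bool: "Const (of_bool P) = of_bool P"
  by (cases P) simp_all

definition linform :: "(nat \<Rightarrow> complex) \<Rightarrow> cpoly" where
  "linform c = (\<Sum>i<4. Const (c i) * Var i)"

lemma linform_cong: "(\<And>i. i < 4 \<Longrightarrow> v i = w i) \<Longrightarrow> linform v = linform w"
  unfolding linform_def by (rule sum.cong) auto

lemma linform_Forms: "linform c \<in> Forms 1"
  unfolding linform_def by (intro Forms_sum Forms_Const_mult Forms_Var) auto

lemma linform_0: "linform (\<lambda>i. 0) = 0" by (simp add: linform_def)

lemma linform_add: "linform v + linform w = linform (\<lambda>i. v i + w i)"
  unfolding linform_def by (simp add: sum.distrib[symmetric] Const_add distrib_right)

lemma linform_sum: "(\<Sum>k\<in>K. Const (c k) * linform (v k)) = linform (\<lambda>i. \<Sum>k\<in>K. c k * v k i)"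
  unfolding linform_def
  by (simp add: sum_distrib_left Const_sum sum_distrib_right mult.assoc Const_mult) (rule sum.swap)

lemma linform_unit: "i < 4 \<Longrightarrow> linform (\<lambda>k. of_bool (k = i)) = Var i"
  unfolding linform_def by (simp add: Const_of_bool sum_lessThan_delta)

lemma partial_linform: "i < 4 \<Longrightarrow> partial i (linform c) = Const (c i)"
  unfolding linform_def
  by (simp add: act_sum_right act_Const_right partial_Var sum_lessThan_delta)

lemma act_linform: "act (linform w) f = (\<Sum>i<4. Const (w i) * partial i f)"
  unfolding linform_def by (simp add: act_sum_left act_Const_left)

lemma act_linform_linform: "act (linform w) (linform v) = Const (\<Sum>i<4. w i * v i)"
  by (simp add: act_linform partial_linform Const_sum Const_mult)

lemma act_linform_Var: "i < 4 \<Longrightarrow> act (linform w) (Var i) = Const (w i)"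
  by (simp add: act_linform partial_Var sum_lessThan_delta)

lemma act_linform_Const: "act (linform w) (Const c) = 0"
  by (simp add: act_linform partial_Const)

lemma act_linform_mult: "act (linform w) (f * g) = act (linform w) f * g + f * act (linform w) g"
  by (simp add: act_linform partial_mult distrib_left sum.distrib sum_distrib_left sum_distrib_right
                mult.assoc mult.left_commute)

lemma Forms_1_eq_linform: "f \<in> Forms 1 \<Longrightarrow> f = linform (\<lambda>i. const (partial i f))"
proof -
  assume f: "f \<in> Forms 1"
  have "f = (\<Sum>i<4. Var i * partial i f)" using euler_homogeneous[OF f] by simp
  also have "\<dots> = (\<Sum>i<4. Const (const (partial i f)) * Var i)"
    by (rule sum.cong[OF refl]) (metis Forms_0_eq_Const Forms_partial One_nat_def f mult.commute)
  finally show ?thesis by (simp add: linform_def)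
qed

lemma unit_mono_inject: "unit_mono i = unit_mono j \<longleftrightarrow> i = j"
  unfolding unit_mono_def by (metis lookup_single_eq lookup_single_not_eq zero_neq_one)

lemma lcoords_linform: "j < 4 \<Longrightarrow> lcoords (linform c) j = c j"
proof -
  have "Poly_Mapping.lookup (Var i) (unit_mono j) = of_bool (i = j)" for i
    by (simp add: Var_unit_mono lookup_single when_def unit_mono_inject)
  moreover assume "j < 4"
  ultimately show ?thesis
    unfolding lcoords_def linform_def unit_mono_def[symmetric]
    by (simp add: lookup_sum lookup_Const_mult sum_lessThan_delta)
qed

lemma Forms_1_eq_linform_lcoords: "f \<in> Forms 1 \<Longrightarrow> f = linform (lcoords f)"
proof -
  assume "f \<in> Forms 1"
  then have f: "f = linform (\<lambda>i. const (partial i f))" by (rule Forms_1_eq_linform)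
  have "lcoords f i = const (partial i f)" if "i < 4" for i
    using lcoords_linform[OF that] f by metis
  then show ?thesis by (subst f) (rule linform_cong, simp)
qed

definition hess :: "cpoly \<Rightarrow> nat \<Rightarrow> nat \<Rightarrow> complex" where
  "hess q i j = const (partial i (partial j q))"

lemma hess_sym: "hess q i j = hess q j i"
  unfolding hess_def by (simp add: act_commute)

lemma partial_Forms_2: "f \<in> Forms 2 \<Longrightarrow> partial i f = linform (hess f i)"
proof -
  assume "f \<in> Forms 2"
  then have "partial i f \<in> Forms 1" using Forms_partial[of f 1 i] by (simp add: numeral_2_eq_2)
  then have "partial i f = linform (\<lambda>j. const (partial j (partial i f)))"
    by (rule Forms_1_eq_linform)
  moreover have "hess f i = (\<lambda>j. const (partial j (partial i f)))"
    unfolding hess_def by (rule ext, rule arg_cong[where f=const], rule act_commute)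
  ultimately show ?thesis by simp
qed

lemma Forms_2_eq_hess: "f \<in> Forms 2 \<Longrightarrow> 2 * f = (\<Sum>i<4. Var i * linform (hess f i))"
  using euler_homogeneous[of f 2] by (simp add: partial_Forms_2 Const_numeral)

lemma act_square_square:
  "act (linform p * linform p) (linform d * linform d) = Const (2 * (\<Sum>i<4. p i * d i)\<^sup>2)"
proof -
  let ?m = "\<Sum>i<4. p i * d i"
  have "act (linform p) (linform d * linform d) = Const ?m * linform d + linform d * Const ?m"
    by (simp add: act_linform_mult act_linform_linform)
  then have "act (linform p * linform p) (linform d * linform d) =
      Const ?m * Const ?m + (Const ?m * Const ?m + linform d * 0)"
    by (simp only: act_mult act_add_right act_Const_right act_linform_mult act_linform_linform
                   act_linform_Const)
  then show ?thesis by (simp add: Const_mult[symmetric] Const_add[symmetric] power2_eq_square)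
qed

text \<open>Polarization gives \<open>k(x\<^sub>i x\<^sub>j) = 0\<close>, and \<open>k(x\<^sub>i x\<^sub>j)\<close> is the \<open>(i, j)\<close> entry of
  the Hessian of \<open>k\<close>.\<close>
lemma Forms_2_eq_0_if_squares:
  assumes k: "k \<in> Forms 2" and squares: "\<And>u. act k (linform u * linform u) = 0"
  shows "k = 0"
proof -
  have polar: "act k (Var i * Var j) = 0" if i: "i < 4" and j: "j < 4" for i j
  proof -
    let ?e = "\<lambda>i t. of_bool (t = i) :: complex"
    have "Var i + Var j = linform (\<lambda>t. ?e i t + ?e j t)"
      using linform_add[of "?e i" "?e j"] by (simp add: linform_unit i j)
    then have "act k ((Var i + Var j) * (Var i + Var j)) = 0" by (simp only: squares)
    moreover have "(Var i + Var j) * (Var i + Var j) =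
        Var i * Var i + Var j * Var j + Const 2 * (Var i * Var j)"
      by (simp add: Const_numeral algebra_simps)
    ultimately have "Const 2 * act k (Var i * Var j) = 0"
      using squares[of "?e i"] squares[of "?e j"]
      by (simp add: linform_unit i j act_add_right act_Const_right)
    then show ?thesis by (simp add: Const_numeral double_eq_0_iff)
  qed
  have hess_0: "hess k i j = 0" if i: "i < 4" and j: "j < 4" for i j
  proof -
    have "act (2 * k) (Var i * Var j) =
        (\<Sum>r<4. partial r (Const (hess k r i) * Var j + Var i * Const (hess k r j)))"
      unfolding Forms_2_eq_hess[OF k]
      by (simp add: act_sum_left act_mult act_linform_mult act_linform_Var i j)
    also have "\<dots> =
        (\<Sum>r<4. Const (hess k r i) * of_bool (r = j) + of_bool (r = i) * Const (hess k r j))"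
      by (simp add: act_add_right act_Const_right partial_mult partial_Var partial_Const)
    also have "\<dots> = Const (hess k j i) + Const (hess k i j)"
      by (simp only: sum.distrib sum_lessThan_delta i j)
    also have "\<dots> = Const 2 * Const (hess k i j)"
      by (simp add: hess_sym[of k j i] Const_numeral)
    finally have "Const 2 * Const (hess k i j) = 0"
      using polar[OF i j] by (simp add: act_Const_left Const_numeral[symmetric])
    then show ?thesis by (simp add: Const_numeral double_eq_0_iff)
  qed
  have "2 * k = (\<Sum>r<4. Var r * linform (\<lambda>s. 0))"
    unfolding Forms_2_eq_hess[OF k]
    by (intro sum.cong refl arg_cong[where f="(*) _"] linform_cong) (simp add: hess_0)
  then show ?thesis by (simp add: linform_0 double_eq_0_iff)
qed

definition vecmat :: "(nat \<Rightarrow> complex) \<Rightarrow> (nat \<Rightarrow> nat \<Rightarrow> complex) \<Rightarrow> nat \<Rightarrow> complex" where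
  "vecmat w M = (\<lambda>k. \<Sum>i<4. w i * M i k)"

definition bilin :: "(nat \<Rightarrow> nat \<Rightarrow> complex) \<Rightarrow> (nat \<Rightarrow> complex) \<Rightarrow> (nat \<Rightarrow> complex) \<Rightarrow> complex" where
  "bilin M x y = (\<Sum>k<4. vecmat x M k * y k)"

lemma vecmat_vecmat:
  assumes "\<And>i. i < 4 \<Longrightarrow> (\<Sum>j<4. M i j * N j k) = of_bool (i = k)" "k < 4"
  shows "vecmat (vecmat w M) N k = w k"
proof -
  have "vecmat (vecmat w M) N k = (\<Sum>i<4. w i * (\<Sum>j<4. M i j * N j k))"
    unfolding vecmat_def by (simp add: sum_distrib_left sum_distrib_right mult.assoc) (rule sum.swap)
  also have "\<dots> = w k" by (simp add: assms(1) sum_lessThan_delta assms(2))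
  finally show ?thesis .
qed

lemma bilin_commute:
  assumes "\<And>i j. M i j = M j i"
  shows "bilin M x y = bilin M y x"
proof -
  have "bilin M x y = (\<Sum>k<4. \<Sum>i<4. x i * M i k * y k)"
    by (simp add: bilin_def vecmat_def sum_distrib_right)
  also have "\<dots> = (\<Sum>i<4. \<Sum>k<4. y k * M k i * x i)"
    by (subst sum.swap) (simp add: assms[of _ i for i] mult_ac)
  also have "\<dots> = bilin M y x"
    by (simp add: bilin_def vecmat_def sum_distrib_right)
  finally show ?thesis .
qed

lemma peval_superset:
  "finite S \<Longrightarrow> Poly_Mapping.keys f \<subseteq> S \<Longrightarrow>
     peval f x = (\<Sum>m\<in>S. Poly_Mapping.lookup f m *
                    (\<Prod>i\<in>Poly_Mapping.keys m. x i ^ Poly_Mapping.lookup m i))"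
  unfolding peval_def by (rule sum.mono_neutral_left) (auto simp: in_keys_iff)

lemma peval_add: "peval (f + g) x = peval f x + peval g x"
proof -
  let ?S = "Poly_Mapping.keys f \<union> Poly_Mapping.keys g"
  have "Poly_Mapping.keys (f + g) \<subseteq> ?S" by (rule keys_add)
  then show ?thesis by (simp add: peval_superset[of ?S] lookup_add distrib_right sum.distrib)
qed

lemma peval_Const_mult: "peval (Const c * f) x = c * peval f x"
  by (simp add: peval_superset[of "Poly_Mapping.keys f"] keys_Const_mult lookup_Const_mult
                sum_distrib_left mult.assoc)

lemma peval_0 [simp]: "peval 0 x = 0" by (simp add: peval_def)

lemma peval_sum: "peval (\<Sum>k\<in>K. F k) x = (\<Sum>k\<in>K. peval (F k) x)"
  by (induction K rule: infinite_finite_induct) (auto simp: peval_add)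

lemma peval_Var_mult_Var: "peval (Var j * Var k) x = x j * x k"
proof -
  let ?m = "unit_mono j + unit_mono k"
  have "Var j * Var k = Poly_Mapping.single ?m 1" by (simp add: Var_unit_mono mult_single)
  then have "peval (Var j * Var k) x =
      (\<Prod>i\<in>Poly_Mapping.keys ?m. x i ^ Poly_Mapping.lookup ?m i)"
    by (simp add: peval_def)
  also have "\<dots> = (\<Prod>i\<in>{j, k}. x i ^ Poly_Mapping.lookup ?m i)"
    by (rule prod.mono_neutral_left)
       (auto simp: in_keys_iff lookup_add lookup_unit_mono split: if_splits)
  also have "\<dots> = x j * x k"
    by (cases "j = k") (auto simp: lookup_add lookup_unit_mono power2_eq_square)
  finally show ?thesis .
qed

section \<open>The quadric of the inverse Hessian\<close>

locale hessian_inverse =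
  fixes q :: cpoly and b :: "nat \<Rightarrow> nat \<Rightarrow> complex"
  assumes quadratic: "q \<in> Forms 2"
    and hess_b: "\<And>i j. i < 4 \<Longrightarrow> j < 4 \<Longrightarrow> (\<Sum>k<4. hess q i k * b k j) = of_bool (i = j)"
    and b_hess: "\<And>i j. i < 4 \<Longrightarrow> j < 4 \<Longrightarrow> (\<Sum>k<4. b i k * hess q k j) = of_bool (i = j)"
    and b_sym: "\<And>i j. b i j = b j i"
begin

lemma act_linform_q: "act (linform w) q = linform (vecmat w (hess q))"
  by (simp add: act_linform partial_Forms_2[OF quadratic] linform_sum vecmat_def)

lemma act_linform_b_q: "act (linform (vecmat w b)) q = linform w"
  unfolding act_linform_q by (rule linform_cong) (simp add: vecmat_vecmat b_hess)

lemma linform_vecmat_hess_b: "linform (vecmat (vecmat w (hess q)) b) = linform w"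
  by (rule linform_cong) (simp add: vecmat_vecmat hess_b)

lemma act_linform_row_b_q: "j < 4 \<Longrightarrow> act (linform (b j)) q = Var j"
proof -
  assume j: "j < 4"
  have "act (linform (b j)) q = linform (\<lambda>k. of_bool (k = j))"
    unfolding act_linform_q by (rule linform_cong) (auto simp: vecmat_def b_hess j)
  then show ?thesis by (simp add: linform_unit j)
qed

definition dual_quadric :: cpoly where
  "dual_quadric = Const (1/2) * (\<Sum>j<4. Var j * linform (b j))"

lemma dual_quadric_Forms: "dual_quadric \<in> Forms 2"
  unfolding dual_quadric_def using Forms_mult[OF Forms_Var linform_Forms]
  by (intro Forms_Const_mult Forms_sum) (simp add: numeral_2_eq_2)

lemma partial_dual_quadric: "i < 4 \<Longrightarrow> partial i dual_quadric = linform (b i)"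
proof -
  assume i: "i < 4"
  have "partial i (Var j * linform (b j)) = of_bool (i = j) * linform (b j) + Var j * Const (b j i)"
    if "j < 4" for j
    using that by (simp add: partial_mult partial_Var partial_linform i)
  then have "partial i (\<Sum>j<4. Var j * linform (b j)) =
      (\<Sum>j<4. of_bool (i = j) * linform (b j)) + (\<Sum>j<4. Var j * Const (b j i))"
    by (simp add: act_sum_right sum.distrib)
  also have "(\<Sum>j<4. Var j * Const (b j i)) = linform (b i)"
    unfolding linform_def by (intro sum.cong refl) (simp only: b_sym[of i] mult.commute)
  also have "(\<Sum>j<4. of_bool (i = j) * linform (b j)) = linform (b i)"
    using i by (simp only: sum_lessThan_delta)
  finally show ?thesis
    unfolding dual_quadric_def by (simp add: act_Const_right Const_half_double)
qed

lemma act_linform_dual_quadric: "act (linform w) dual_quadric = linform (vecmat w b)"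
  by (simp add: act_linform partial_dual_quadric linform_sum vecmat_def)

lemma act_dual_quadric:
  "act dual_quadric f = Const (1/2) * (\<Sum>j<4. partial j (act (linform (b j)) f))"
  unfolding dual_quadric_def by (simp only: act_Const_left) (simp add: act_sum_left act_mult)

lemma dual_quadric_qq: "act dual_quadric (q * q) = Const 6 * q"
proof -
  have "act (linform (b j)) (q * q) = Const 2 * (q * Var j)" if "j < 4" for j
  proof -
    have "act (linform (b j)) (q * q) = Var j * q + q * Var j"
      by (simp add: act_linform_mult act_linform_row_b_q that)
    then show ?thesis by (simp add: Const_numeral mult.commute[of "Var j"])
  qed
  then have "act dual_quadric (q * q) = Const (1/2) * (\<Sum>j<4. partial j (Const 2 * (q * Var j)))"
    by (simp add: act_dual_quadric)
  also have "\<dots> = Const (1/2) * (\<Sum>j<4. Const 2 * (Var j * partial j q) + Const 2 * q)"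
    by (simp add: act_Const_right partial_mult partial_Var distrib_left mult.commute[of "partial _ q"])
  also have "\<dots> = Const (1/2) * (Const 2 * (\<Sum>j<4. Var j * partial j q) + Const 8 * q)"
    by (simp add: sum.distrib sum_distrib_left Const_numeral)
  also have "\<dots> = Const 6 * q"
    by (simp add: euler_homogeneous[OF quadratic] mult.assoc[symmetric] Const_mult[symmetric]
                  Const_add[symmetric] distrib_right[symmetric] distrib_left)
  finally show ?thesis .
qed

lemma dual_quadric_square: "act dual_quadric (linform d * linform d) = Const (bilin b d d)"
proof -
  have "partial j (act (linform (b j)) (linform d * linform d)) =
      2 * Const ((\<Sum>i<4. b j i * d i) * d j)" if j: "j < 4" for j
  proof -
    let ?x = "\<Sum>i<4. b j i * d i"
    have "act (linform (b j)) (linform d * linform d) = Const ?x * linform d + linform d * Const ?x"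
      by (simp add: act_linform_mult act_linform_linform)
    then show ?thesis
      using j by (simp add: act_add_right act_Const_right partial_mult partial_linform partial_Const
                            Const_mult[symmetric] mult.commute[of "d j"])
  qed
  then have "act dual_quadric (linform d * linform d) =
      Const (1/2) * (2 * Const (\<Sum>j<4. (\<Sum>i<4. b j i * d i) * d j))"
    by (simp add: act_dual_quadric Const_sum sum_distrib_left)
  also have "(\<Sum>j<4. (\<Sum>i<4. b j i * d i) * d j) = bilin b d d"
    unfolding bilin_def vecmat_def by (rule sum.cong[OF refl]) (simp add: b_sym mult.commute)
  finally show ?thesis by (simp only: Const_half_double)
qed

definition qsub_form :: "(nat \<Rightarrow> complex) \<Rightarrow> cpoly" where
  "qsub_form c = Const (1/2) * (linform (vecmat c b) * linform (vecmat c b))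
                 - Const (bilin b c c / 6) * dual_quadric"

lemma qsub_form_Forms: "qsub_form c \<in> Forms 2"
  unfolding qsub_form_def using Forms_mult[OF linform_Forms linform_Forms]
  by (intro Forms_diff Forms_Const_mult dual_quadric_Forms) (simp add: numeral_2_eq_2)

lemma qsub_form_qq: "act (qsub_form c) (q * q) = linform c * linform c"
proof -
  let ?P = "linform (vecmat c b)" and ?L = "linform c" and ?a = "Const (bilin b c c)"
  have Pq: "act ?P q = ?L" by (rule act_linform_b_q)
  have PL: "act ?P ?L = ?a" by (simp add: act_linform_linform bilin_def)
  have "act (?P * ?P) (q * q) = act ?P (?L * q + q * ?L)"
    by (simp only: act_mult act_linform_mult Pq)
  also have "\<dots> = ?a * q + ?L * ?L + (?L * ?L + q * ?a)"
    by (simp only: act_add_right act_linform_mult Pq PL)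
  also have "\<dots> = 2 * (?L * ?L + ?a * q)"
    by (simp add: algebra_simps)
  finally have "act (qsub_form c) (q * q) =
      Const (1/2) * (2 * (?L * ?L + ?a * q)) - Const (bilin b c c / 6) * (Const 6 * q)"
    unfolding qsub_form_def by (simp only: act_diff_left act_Const_left dual_quadric_qq)
  also have "\<dots> = ?L * ?L"
    by (simp only: Const_half_double) (simp add: mult.assoc[symmetric] Const_mult[symmetric])
  finally show ?thesis .
qed

lemma qsub_form_square:
  "act (qsub_form c) (linform d * linform d) = Const ((bilin b c d)\<^sup>2 - bilin b c c * bilin b d d / 6)"
proof -
  have "act (qsub_form c) (linform d * linform d) =
      Const (1/2) * Const (2 * (bilin b c d)\<^sup>2) - Const (bilin b c c / 6) * Const (bilin b d d)"
    unfolding qsub_form_def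
    by (simp only: act_diff_left act_Const_left act_square_square dual_quadric_square bilin_def)
  then show ?thesis by (simp add: Const_mult[symmetric] Const_diff[symmetric])
qed

lemma Forms_2_eq_0_if_annihilates_qq:
  assumes "k \<in> Forms 2" "act k (q * q) = 0"
  shows "k = 0"
proof (rule Forms_2_eq_0_if_squares[OF assms(1)])
  fix u
  have "act k (linform u * linform u) = act k (act (qsub_form u) (q * q))"
    by (simp only: qsub_form_qq)
  also have "\<dots> = act (qsub_form u) (act k (q * q))" by (rule act_commute)
  finally show "act k (linform u * linform u) = 0" by (simp add: assms(2))
qed

lemma qsub_linform: "qsub q (linform c) = qsub_form c"
  unfolding qsub_def
proof (rule the_equality)
  show "qsub_form c \<in> Forms 2 \<and> act (qsub_form c) (q * q) = linform c * linform c"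
    by (simp add: qsub_form_Forms qsub_form_qq)
next
  fix g assume g: "g \<in> Forms 2 \<and> act g (q * q) = linform c * linform c"
  have "g - qsub_form c = 0"
  proof (rule Forms_2_eq_0_if_annihilates_qq)
    show "g - qsub_form c \<in> Forms 2" using g by (simp add: Forms_diff qsub_form_Forms)
    show "act (g - qsub_form c) (q * q) = 0" using g by (simp add: act_diff_left qsub_form_qq)
  qed
  then show "g = qsub_form c" by simp
qed

lemma qinv_eq: "qinv q = dual_quadric"
  unfolding qinv_def
proof (rule the_equality)
  have "act (act l dual_quadric) q = l" if l: "l \<in> Forms 1" for l
  proof -
    obtain c where "l = linform c" using Forms_1_eq_linform[OF l] by blast
    then show ?thesis by (simp add: act_linform_dual_quadric act_linform_b_q)
  qed
  moreover have "act (act g q) dual_quadric = g" if g: "g \<in> Forms 1" for g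
  proof -
    obtain c where "g = linform c" using Forms_1_eq_linform[OF g] by blast
    then show ?thesis by (simp add: act_linform_q act_linform_dual_quadric linform_vecmat_hess_b)
  qed
  ultimately show "dual_quadric \<in> Forms 2 \<and> (\<forall>l\<in>Forms 1. act (act l dual_quadric) q = l)
      \<and> (\<forall>g\<in>Forms 1. act (act g q) dual_quadric = g)"
    by (simp add: dual_quadric_Forms)
next
  fix h
  assume h: "h \<in> Forms 2 \<and> (\<forall>l\<in>Forms 1. act (act l h) q = l) \<and> (\<forall>g\<in>Forms 1. act (act g q) h = g)"
  have "h \<in> Forms (Suc 1)" "dual_quadric \<in> Forms (Suc 1)"
    using h dual_quadric_Forms by (simp_all add: numeral_2_eq_2)
  moreover have "partial i h = partial i dual_quadric" if i: "i < 4" for i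
  proof -
    have "act (act (linform (b i)) q) h = linform (b i)" using h linform_Forms by blast
    then show ?thesis by (simp add: act_linform_row_b_q i partial_dual_quadric)
  qed
  ultimately show "h = dual_quadric" by (rule Forms_eq_if_partial_eq)
qed

lemma act_pl_linform: "act (pl q (linform d)) (linform c) = Const (bilin b d c)"
  by (simp add: pl_def qinv_eq act_linform_dual_quadric act_linform_linform bilin_def)

lemma peval_dual_quadric: "peval dual_quadric x = bilin b x x / 2"
proof -
  have normal: "Const a * (V * (Const c * W)) = Const (c * a) * (V * W)" for a c V W
    by (simp add: Const_mult algebra_simps)
  have "dual_quadric = (\<Sum>j<4. \<Sum>k<4. Const (1/2) * (Var j * (Const (b j k) * Var k)))"
    unfolding dual_quadric_def linform_def by (simp add: sum_distrib_left)
  also have "\<dots> = (\<Sum>j<4. \<Sum>k<4. Const (b j k * (1/2)) * (Var j * Var k))"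
    by (simp only: normal)
  finally have "peval dual_quadric x = (\<Sum>j<4. \<Sum>k<4. b j k * (1/2) * (x j * x k))"
    by (simp add: peval_sum peval_Const_mult peval_Var_mult_Var)
  also have "\<dots> = (\<Sum>j<4. \<Sum>k<4. x j * b j k * x k) / 2"
    by (simp add: sum_divide_distrib mult_ac)
  also have "(\<Sum>j<4. \<Sum>k<4. x j * b j k * x k) = bilin b x x"
    unfolding bilin_def vecmat_def by (subst sum.swap) (simp add: sum_distrib_right)
  finally show ?thesis .
qed

end

section \<open>Existence of the inverse Hessian\<close>

lemma bij_idx4: "bij_betw idx4 (UNIV :: 4 set) {0..<4}"
proof -
  have "type_definition (Rep_bit0 :: 4 \<Rightarrow> int) Abs_bit0 {0..<4}"
    using type_definition_bit0[where 'a=2] by simp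
  then have "bij_betw (Rep_bit0 :: 4 \<Rightarrow> int) UNIV {0..<4}"
    by (auto simp: bij_betw_def inj_on_def type_definition.Rep_inject type_definition.Rep_range)
  moreover have "bij_betw nat {0..<4::int} {0..<4}"
    by (auto simp: bij_betw_def inj_on_def image_iff)
       (metis atLeastLessThan_iff nat_int of_nat_0_le_iff of_nat_less_numeral_iff)
  moreover have "idx4 = nat \<circ> Rep_bit0" by (simp add: fun_eq_iff idx4_def)
  ultimately show ?thesis by (metis bij_betw_trans)
qed

lemma idx4_inv_idx4: "i < 4 \<Longrightarrow> idx4 (inv idx4 i) = i"
  using bij_idx4 by (intro f_inv_into_f) (auto simp: bij_betw_def)

lemma inv_idx4_idx4: "inv idx4 (idx4 r) = r"
  using bij_idx4 by (simp add: bij_betw_def)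

lemma sum_lessThan_4_idx4: "(\<Sum>k<4. f k) = (\<Sum>r\<in>UNIV. f (idx4 r))"
  using sum.reindex_bij_betw[OF bij_idx4, of f] by (simp add: lessThan_atLeast0)

definition nat_entry :: "'a^4^4 \<Rightarrow> nat \<Rightarrow> nat \<Rightarrow> 'a" where
  "nat_entry M i j = M $ inv idx4 i $ inv idx4 j"

lemma nat_entry_mult:
  "nat_entry (M ** N) i j = (\<Sum>k<4. nat_entry M i k * nat_entry N k j)"
  unfolding nat_entry_def matrix_matrix_mult_def sum_lessThan_4_idx4 by (simp add: inv_idx4_idx4)

lemma nat_entry_mat_1: "i < 4 \<Longrightarrow> j < 4 \<Longrightarrow> nat_entry (mat 1) i j = of_bool (i = j)"
  unfolding nat_entry_def mat_def by (auto dest: arg_cong[of _ _ idx4] simp: idx4_inv_idx4)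

lemma nat_entry_transpose: "nat_entry (transpose M) i j = nat_entry M j i"
  by (simp add: nat_entry_def transpose_def)

lemma qmatrix_entry: "qmatrix q $ r $ s = hess q (idx4 r) (idx4 s)"
  by (simp add: qmatrix_def hess_def act_mult)

lemma nat_entry_qmatrix: "i < 4 \<Longrightarrow> j < 4 \<Longrightarrow> nat_entry (qmatrix q) i j = hess q i j"
  by (simp add: nat_entry_def qmatrix_entry idx4_inv_idx4)

lemma transpose_qmatrix: "transpose (qmatrix q) = qmatrix q"
  by (simp add: vec_eq_iff transpose_def qmatrix_entry hess_sym)

lemma invertible_if_rank_4:
  fixes A :: "complex^4^4"
  assumes "rank A = 4"
  shows "invertible A"
proof -
  have "vec.dim (rows A) = vec.dimension TYPE(complex) TYPE(4)"
    using assms by (simp add: row_rank_def_gen vec.dimension_def card_cart_basis)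
  then have "vec.span (rows A) = UNIV" by (simp only: vec.dim_eq_full)
  then obtain B :: "complex^4^4" where "B ** A = mat 1"
    using matrix_left_invertible_span_rows_gen by blast
  then show ?thesis using matrix_left_right_inverse by (auto simp: invertible_def)
qed

lemma symmetric_inverse:
  fixes A B :: "'a::comm_semiring_1^'n^'n"
  assumes "transpose A = A" "A ** B = mat 1" "B ** A = mat 1"
  shows "transpose B = B"
proof -
  have "transpose B = transpose B ** (A ** B)" by (simp add: assms(2))
  also have "\<dots> = transpose (A ** B) ** B"
    by (simp add: matrix_mul_assoc matrix_transpose_mul assms(1))
  also have "\<dots> = B" by (simp add: assms(2))
  finally show ?thesis .
qed

lemma hessian_inverse_exists:
  assumes "q \<in> Forms 2" "qrank q = 4"
  shows "\<exists>b. hessian_inverse q b"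
proof -
  obtain B where AB: "qmatrix q ** B = mat 1" and BA: "B ** qmatrix q = mat 1"
    using invertible_if_rank_4[of "qmatrix q"] assms(2) by (auto simp: qrank_def invertible_def)
  have B_sym: "transpose B = B"
    using symmetric_inverse[OF transpose_qmatrix AB BA] .
  have "hessian_inverse q (nat_entry B)"
  proof
    show "q \<in> Forms 2" by (rule assms(1))
    show "(\<Sum>k<4. hess q i k * nat_entry B k j) = of_bool (i = j)" if "i < 4" "j < 4" for i j
      using arg_cong[OF AB, of "\<lambda>M. nat_entry M i j"] that
      by (simp add: nat_entry_mult nat_entry_mat_1 nat_entry_qmatrix)
    show "(\<Sum>k<4. nat_entry B i k * hess q k j) = of_bool (i = j)" if "i < 4" "j < 4" for i j
      using arg_cong[OF BA, of "\<lambda>M. nat_entry M i j"] that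
      by (simp add: nat_entry_mult nat_entry_mat_1 nat_entry_qmatrix)
    show "nat_entry B i j = nat_entry B j i" for i j
      by (metis B_sym nat_entry_transpose)
  qed
  then show ?thesis by blast
qed

theorem lemma4p11:
  fixes q l1 l2 :: cpoly
  assumes "q \<in> Forms 2" and "qrank q = 4"
    and "l1 \<in> Forms 1" and "l1 \<noteq> 0" and "l2 \<in> Forms 1" and "l2 \<noteq> 0"
    and "act (qsub q l1) (l2 * l2) = 0"
  shows "(const (act (pl q l2) l1) = 0 \<and> const (act (pl q l1) l2) = 0) \<longleftrightarrow>
         (peval (qinv q) (lcoords l1) = 0 \<or> peval (qinv q) (lcoords l2) = 0)"
proof -
  obtain b where "hessian_inverse q b" using hessian_inverse_exists[OF assms(1,2)] ..
  then interpret hessian_inverse q b .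
  define c d where "c = lcoords l1" and "d = lcoords l2"
  have l1: "l1 = linform c" and l2: "l2 = linform d"
    unfolding c_def d_def using assms(3,5) by (simp_all add: Forms_1_eq_linform_lcoords[symmetric])
  have "(bilin b c d)\<^sup>2 = bilin b c c * bilin b d d / 6"
    using assms(7) unfolding l1 l2 qsub_linform qsub_form_square by simp
  moreover have "const (act (pl q l2) l1) = bilin b c d" "const (act (pl q l1) l2) = bilin b c d"
    unfolding l1 l2 act_pl_linform using bilin_commute[OF b_sym] by simp_all
  moreover have "peval (qinv q) (lcoords l1) = bilin b c c / 2"
    "peval (qinv q) (lcoords l2) = bilin b d d / 2"
    unfolding qinv_eq c_def[symmetric] d_def[symmetric] by (simp_all add: peval_dual_quadric)
  ultimately show ?thesis by auto
qed

end
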